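(* Let $G$ be an upward planar single-source digraph with maximum in- and outdegree at most two. Then in every upward planar embedding of $G$, no edge of $G$ is a bad edge with respect to the outer face.
   Context: A planar drawing of a digraph is upward if every edge $(u,v)$ is drawn as a curve strictly increasing in $y$ from $u$ to $v$; an upward planar embedding is the equivalence class of upward planar drawings with the same left-to-right orderings of incoming edges and of outgoing edges around each vertex. A single-source digraph has exactly one vertex of indegree zero. If a vertex has two incoming (outgoing) edges, these are its left and right incoming (outgoing) edges according to the embedding. An edge $e=(u,v)$ is bad with respect to face $f$ if either $e$ is the left outgoing edge of $u$ and the left incoming edge of $v$ and $f$ is the face to the right of $e$, or $e$ is the right outgoing edge of $u$ and the right incoming edge of $v$ and $f$ is the face to the left of $e$. *)

theory Defs
  imports "HOL-Analysis.Analysis" "Graph_Theory.Digraph"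
begin

definition upward_planar_drawing ::
  "('a, 'b) pre_digraph \<Rightarrow> ('a \<Rightarrow> real \<times> real) \<Rightarrow> ('b \<Rightarrow> real \<Rightarrow> real \<times> real) \<Rightarrow> bool" where
  "upward_planar_drawing G pos \<gamma> \<longleftrightarrow>
     inj_on pos (verts G) \<and>
     (\<forall>e\<in>arcs G. path (\<gamma> e) \<and> pathstart (\<gamma> e) = pos (tail G e) \<and>
        pathfinish (\<gamma> e) = pos (head G e) \<and> strict_mono_on {0..1} (\<lambda>t. snd (\<gamma> e t))) \<and>
     (\<forall>e\<in>arcs G. \<forall>e'\<in>arcs G. e \<noteq> e' \<longrightarrow>
        path_image (\<gamma> e) \<inter> path_image (\<gamma> e') \<subseteq>
          pos ` ({tail G e, head G e} \<inter> {tail G e', head G e'})) \<and>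
     (\<forall>v\<in>verts G. \<forall>e\<in>arcs G. pos v \<in> path_image (\<gamma> e) \<longrightarrow> v = tail G e \<or> v = head G e)"

text \<open>The point set of the drawing; its complement splits into the faces.\<close>
definition drawing_set ::
  "('a, 'b) pre_digraph \<Rightarrow> ('a \<Rightarrow> real \<times> real) \<Rightarrow> ('b \<Rightarrow> real \<Rightarrow> real \<times> real) \<Rightarrow> (real \<times> real) set" where
  "drawing_set G pos \<gamma> = pos ` verts G \<union> (\<Union>e\<in>arcs G. path_image (\<gamma> e))"

definition left_near_start :: "('b \<Rightarrow> real \<Rightarrow> real \<times> real) \<Rightarrow> 'b \<Rightarrow> 'b \<Rightarrow> bool" where
  "left_near_start \<gamma> e1 e2 \<longleftrightarrow> (\<exists>\<delta>>0. \<delta> \<le> 1 \<and>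
     (\<forall>s\<in>{0<..<\<delta>}. \<forall>t\<in>{0<..<\<delta>}. snd (\<gamma> e1 s) = snd (\<gamma> e2 t) \<longrightarrow> fst (\<gamma> e1 s) < fst (\<gamma> e2 t)))"

definition left_near_end :: "('b \<Rightarrow> real \<Rightarrow> real \<times> real) \<Rightarrow> 'b \<Rightarrow> 'b \<Rightarrow> bool" where
  "left_near_end \<gamma> e1 e2 \<longleftrightarrow> (\<exists>\<delta>>0. \<delta> \<le> 1 \<and>
     (\<forall>s\<in>{1-\<delta><..<1}. \<forall>t\<in>{1-\<delta><..<1}. snd (\<gamma> e1 s) = snd (\<gamma> e2 t) \<longrightarrow> fst (\<gamma> e1 s) < fst (\<gamma> e2 t)))"

definition left_outgoing :: "('a, 'b) pre_digraph \<Rightarrow> ('b \<Rightarrow> real \<Rightarrow> real \<times> real) \<Rightarrow> 'b \<Rightarrow> bool" where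
  "left_outgoing G \<gamma> e \<longleftrightarrow> (\<exists>e'\<in>arcs G. e' \<noteq> e \<and> tail G e' = tail G e \<and> left_near_start \<gamma> e e')"

definition right_outgoing :: "('a, 'b) pre_digraph \<Rightarrow> ('b \<Rightarrow> real \<Rightarrow> real \<times> real) \<Rightarrow> 'b \<Rightarrow> bool" where
  "right_outgoing G \<gamma> e \<longleftrightarrow> (\<exists>e'\<in>arcs G. e' \<noteq> e \<and> tail G e' = tail G e \<and> left_near_start \<gamma> e' e)"

definition left_incoming :: "('a, 'b) pre_digraph \<Rightarrow> ('b \<Rightarrow> real \<Rightarrow> real \<times> real) \<Rightarrow> 'b \<Rightarrow> bool" where
  "left_incoming G \<gamma> e \<longleftrightarrow> (\<exists>e'\<in>arcs G. e' \<noteq> e \<and> head G e' = head G e \<and> left_near_end \<gamma> e e')"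

definition right_incoming :: "('a, 'b) pre_digraph \<Rightarrow> ('b \<Rightarrow> real \<Rightarrow> real \<times> real) \<Rightarrow> 'b \<Rightarrow> bool" where
  "right_incoming G \<gamma> e \<longleftrightarrow> (\<exists>e'\<in>arcs G. e' \<noteq> e \<and> head G e' = head G e \<and> left_near_end \<gamma> e' e)"

text \<open>The face immediately to the right (left) of arc e is the outer face,
i.e. the unbounded component of the complement of the drawing.\<close>
definition right_face_outer ::
  "('a, 'b) pre_digraph \<Rightarrow> ('a \<Rightarrow> real \<times> real) \<Rightarrow> ('b \<Rightarrow> real \<Rightarrow> real \<times> real) \<Rightarrow> 'b \<Rightarrow> bool" where
  "right_face_outer G pos \<gamma> e \<longleftrightarrow> (\<exists>s\<in>{0<..<1}. \<exists>\<epsilon>>0. \<forall>t\<in>{0<..<\<epsilon>}.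
      \<gamma> e s + (t, 0) \<in> outside (drawing_set G pos \<gamma>))"

definition left_face_outer ::
  "('a, 'b) pre_digraph \<Rightarrow> ('a \<Rightarrow> real \<times> real) \<Rightarrow> ('b \<Rightarrow> real \<Rightarrow> real \<times> real) \<Rightarrow> 'b \<Rightarrow> bool" where
  "left_face_outer G pos \<gamma> e \<longleftrightarrow> (\<exists>s\<in>{0<..<1}. \<exists>\<epsilon>>0. \<forall>t\<in>{0<..<\<epsilon>}.
      \<gamma> e s - (t, 0) \<in> outside (drawing_set G pos \<gamma>))"

definition bad_wrt_outer_face ::
  "('a, 'b) pre_digraph \<Rightarrow> ('a \<Rightarrow> real \<times> real) \<Rightarrow> ('b \<Rightarrow> real \<Rightarrow> real \<times> real) \<Rightarrow> 'b \<Rightarrow> bool" where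
  "bad_wrt_outer_face G pos \<gamma> e \<longleftrightarrow>
     (left_outgoing G \<gamma> e \<and> left_incoming G \<gamma> e \<and> right_face_outer G pos \<gamma> e) \<or>
     (right_outgoing G \<gamma> e \<and> right_incoming G \<gamma> e \<and> left_face_outer G pos \<gamma> e)"

definition single_source :: "('a, 'b) pre_digraph \<Rightarrow> bool" where
  "single_source G \<longleftrightarrow> (\<exists>!s. s \<in> verts G \<and> in_degree G s = 0)"

end

(*
  Only the incoming half of badness is needed: the face to the right of a left incoming arc
  (and to the left of a right incoming arc) is never the outer face, whatever the degrees.
  Let e1 and e2 enter v with e1 to the left of e2 just below v. As the source is unique and
  heights increase along arcs, the tails of e1 and e2 are reached by upward walks from a common
  ancestor w that share no vertex besides w. Extended by e1 and e2 they become two upward walks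
  from w to v; upward walks are graphs x = f(y), x = g(y) over [y(w), y(v)], which meet only at
  their ends by planarity, and f < g just below v, hence everywhere. The open region between
  the two graphs is bounded and its frontier lies in the drawing, so it misses the outer face,
  yet it contains the points just to the right of e1 and just to the left of e2.
*)
theory Submission
  imports Defs "Graph_Theory.Arc_Walk"
begin

lemma continuous_less_if_neq:
  fixes f g :: "real \<Rightarrow> real"
  assumes "continuous_on S f" "continuous_on S g" "connected S"
    and "\<And>y. y \<in> S \<Longrightarrow> f y \<noteq> g y" "y1 \<in> S" "f y1 < g y1" "y \<in> S"
  shows "f y < g y"
proof (rule ccontr)
  assume "\<not> f y < g y"
  define d where "d y = g y - f y" for y
  have "continuous_on S d" unfolding d_def using assms(1,2) by (intro continuous_intros)
  then have "connected (d ` S)" using assms(3) by (rule connected_continuous_image)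
  moreover have "d y \<le> 0" "0 \<le> d y1" using \<open>\<not> f y < g y\<close> assms(6) by (auto simp: d_def)
  ultimately have "0 \<in> d ` S"
    using connectedD_interval imageI[OF assms(7)] imageI[OF assms(5)] by metis
  then show False using assms(4) by (force simp: d_def)
qed

lemma disjoint_outside_if_frontier_subset:
  fixes S :: "'a :: real_normed_vector set"
  assumes "bounded S" "frontier S \<subseteq> D"
  shows "S \<inter> outside D = {}"
proof -
  have "outside D \<subseteq> outside (frontier S)" by (rule outside_mono[OF assms(2)])
  also have "\<dots> \<subseteq> - closure S" by (rule outside_frontier_misses_closure[OF assms(1)])
  finally show ?thesis using closure_subset by blast
qed

definition between_graphs :: "(real \<Rightarrow> real) \<Rightarrow> (real \<Rightarrow> real) \<Rightarrow> real \<Rightarrow> real \<Rightarrow> (real \<times> real) set"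
  where "between_graphs f g a b = {(x, y). a < y \<and> y < b \<and> f y < x \<and> x < g y}"

context
  fixes f g :: "real \<Rightarrow> real" and a b :: real
  assumes cf: "continuous_on {a..b} f" and cg: "continuous_on {a..b} g"
begin

private lemma continuous_on_graph_offsets:
  "continuous_on (UNIV \<times> {a..b}) (\<lambda>q. (fst q - f (snd q), g (snd q) - fst q))"
  by (intro continuous_intros continuous_on_compose2[OF cf] continuous_on_compose2[OF cg]) auto

lemma open_between_graphs: "open (between_graphs f g a b)"
proof -
  have "between_graphs f g a b = (UNIV \<times> {a<..<b}) \<inter>
      (\<lambda>q. (fst q - f (snd q), g (snd q) - fst q)) -` ({0<..} \<times> {0<..})"
    by (auto simp: between_graphs_def)
  also have "open \<dots>"
    by (intro continuous_open_preimage continuous_on_subset[OF continuous_on_graph_offsets]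
        open_Times) auto
  finally show ?thesis .
qed

lemma frontier_between_graphs:
  assumes "f a = g a" "f b = g b"
  shows "frontier (between_graphs f g a b) \<subseteq> (\<lambda>y. (f y, y)) ` {a..b} \<union> (\<lambda>y. (g y, y)) ` {a..b}"
proof -
  define K where "K = (UNIV \<times> {a..b}) \<inter>
      (\<lambda>q. (fst q - f (snd q), g (snd q) - fst q)) -` ({0..} \<times> {0..})"
  have "closed K"
    unfolding K_def
    by (intro continuous_closed_preimage continuous_on_graph_offsets closed_Times) auto
  have "between_graphs f g a b \<subseteq> K" by (auto simp: between_graphs_def K_def)
  then have "frontier (between_graphs f g a b) \<subseteq> K - between_graphs f g a b"
    using closure_minimal[OF _ \<open>closed K\<close>] interior_open[OF open_between_graphs]
    by (auto simp: frontier_def)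
  also have "\<dots> \<subseteq> (\<lambda>y. (f y, y)) ` {a..b} \<union> (\<lambda>y. (g y, y)) ` {a..b}"
  proof
    fix q assume q: "q \<in> K - between_graphs f g a b"
    obtain s t where [simp]: "q = (s, t)" by fastforce
    from q have "t \<in> {a..b}" "f t \<le> s" "s \<le> g t" and "t = a \<or> t = b \<or> s = f t \<or> s = g t"
      unfolding K_def between_graphs_def by auto
    with assms have "t \<in> {a..b}" "s = f t \<or> s = g t" by auto
    then show "q \<in> (\<lambda>y. (f y, y)) ` {a..b} \<union> (\<lambda>y. (g y, y)) ` {a..b}" by auto
  qed
  finally show ?thesis .
qed

lemma bounded_between_graphs: "bounded (between_graphs f g a b)"
proof -
  obtain M where M: "\<And>t. t \<in> {a..b} \<Longrightarrow> \<bar>f t\<bar> \<le> M \<and> \<bar>g t\<bar> \<le> M"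
  proof -
    obtain Mf Mg where "\<forall>t\<in>{a..b}. norm (f t) \<le> Mf" "\<forall>t\<in>{a..b}. norm (g t) \<le> Mg"
      using compact_continuous_image[OF cf compact_Icc] compact_continuous_image[OF cg compact_Icc]
      by (force dest!: compact_imp_bounded simp: bounded_iff)
    then show thesis by (intro that[of "max Mf Mg"]) fastforce
  qed
  have "between_graphs f g a b \<subseteq> cbox (-M, a) (M, b)"
  proof
    fix q assume "q \<in> between_graphs f g a b"
    then have "snd q \<in> {a..b}" "f (snd q) < fst q" "fst q < g (snd q)"
      by (auto simp: between_graphs_def)
    with M[of "snd q"] show "q \<in> cbox (-M, a) (M, b)"
      by (cases q) (auto simp: cbox_Pair_eq)
  qed
  then show ?thesis by (rule bounded_subset[OF bounded_cbox])
qed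

lemma between_graphs_not_outside:
  assumes "f a = g a" "f b = g b"
    and "\<And>y. y \<in> {a..b} \<Longrightarrow> (f y, y) \<in> D \<and> (g y, y) \<in> D"
    and "y \<in> {a<..<b}" "f y < x" "x < g y"
  shows "(x, y) \<notin> outside D"
proof -
  have "frontier (between_graphs f g a b) \<subseteq> D"
    using frontier_between_graphs[OF assms(1,2)] assms(3) by blast
  with bounded_between_graphs have "between_graphs f g a b \<inter> outside D = {}"
    by (rule disjoint_outside_if_frontier_subset)
  moreover have "(x, y) \<in> between_graphs f g a b"
    using assms(4-6) by (simp add: between_graphs_def)
  ultimately show ?thesis by blast
qed

end

lemma (in wf_digraph) awalk_ConsE:
  assumes "awalk w (e # p) z"
  obtains "e \<in> arcs G" "tail G e = w" "awalk (head G e) p z"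
  using assms by (auto simp: awalk_Cons_iff)

lemma (in wf_digraph) awalk_snoc:
  assumes "awalk w p (tail G e)" "e \<in> arcs G"
  shows "awalk w (p @ [e]) (head G e)"
    and "set (awalk_verts w (p @ [e])) = insert (head G e) (set (awalk_verts w p))"
proof -
  have last: "awlast w p = tail G e" using assms(1) by blast
  then show "awalk w (p @ [e]) (head G e)"
    using assms by (simp add: awalk_simps)
  have "tail G e \<in> set (awalk_verts w p)"
    using last by (metis awalk_verts_non_Nil last_in_set)
  then show "set (awalk_verts w (p @ [e])) = insert (head G e) (set (awalk_verts w p))"
    using set_awalk_verts_append[OF assms(1) arc_implies_awalk[OF assms(2)]] by auto
qed

locale graded_digraph = fin_digraph G for G :: "('a, 'b) pre_digraph" +
  fixes h :: "'a \<Rightarrow> 'c :: linorder"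
  assumes height_tail_less_head: "e \<in> arcs G \<Longrightarrow> h (tail G e) < h (head G e)"
begin

lemma awalk_verts_height:
  assumes "awalk u p v" "x \<in> set (awalk_verts u p)"
  shows "h u \<le> h x \<and> (x \<noteq> v \<longrightarrow> h x < h v)"
  using assms
proof (induction p arbitrary: u x)
  case (Cons e p)
  then obtain e: "e \<in> arcs G" "tail G e = u" "awalk (head G e) p v"
    by (auto elim: awalk_ConsE)
  have "head G e \<in> set (awalk_verts (head G e) p)" using e(3) by (rule hd_in_awalk_verts)
  from Cons.IH[OF e(3) this] have "h (head G e) \<le> h v" by (cases "head G e = v") auto
  then show ?case
    using Cons.prems(2) Cons.IH[OF e(3), of x] e(2)[symmetric] height_tail_less_head[OF e(1)]
    by auto
qed (auto simp: awalk_Nil_iff)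

lemma awalk_height_le:
  assumes "awalk u p v"
  shows "h u \<le> h v"
  using awalk_verts_height[OF assms hd_in_awalk_verts(1)[OF assms]] by (cases "u = v") auto

lemma awalk_height_less:
  assumes "awalk u p v" "p \<noteq> []"
  shows "h u < h v"
proof -
  obtain e p' where "p = e # p'" using assms(2) by (cases p) auto
  with assms(1) obtain "e \<in> arcs G" "tail G e = u" "awalk (head G e) p' v"
    by (auto elim: awalk_ConsE)
  then show ?thesis using height_tail_less_head awalk_height_le by (metis order.strict_trans2)
qed

lemma awalk_arc_to_end_is_last:
  assumes "awalk u p v" "a \<in> set p" "head G a = v"
  shows "a = last p"
proof -
  obtain p1 p2 where p: "p = p1 @ a # p2" using assms(2) by (auto simp: in_set_conv_decomp)
  with assms(1) have "awalk (head G a) p2 v" by (auto simp: awalk_Cons_iff)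
  with assms(3) have "p2 = []" using awalk_height_less by blast
  then show ?thesis using p by simp
qed

lemma source_height_le:
  assumes "single_source G" "s \<in> verts G" "in_degree G s = 0" "v \<in> verts G"
  shows "h s \<le> h v"
proof -
  define m where "m = arg_min_on h (verts G)"
  have ne: "verts G \<noteq> {}" using assms(2) by auto
  have m: "m \<in> verts G" "\<And>v. v \<in> verts G \<Longrightarrow> h m \<le> h v"
    unfolding m_def using arg_min_if_finite(1) arg_min_least finite_verts ne by metis+
  have "in_arcs G m = {}"
  proof (rule equals0I)
    fix e assume "e \<in> in_arcs G m"
    then have "e \<in> arcs G" "head G e = m" by auto
    then show False using m(2)[OF tail_in_verts] height_tail_less_head by fastforce
  qed
  then have "m = s"
    using assms(1-3) m(1) unfolding single_source_def in_degree_def by auto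
  then show ?thesis using m(2) assms(4) by simp
qed

lemma in_arcs_nonempty_if_not_lowest:
  assumes "single_source G" "u \<in> verts G" "v \<in> verts G" "u \<noteq> v" "h u \<le> h v"
  shows "in_arcs G v \<noteq> {}"
proof
  assume "in_arcs G v = {}"
  then have v_source: "in_degree G v = 0" by (simp add: in_degree_def)
  then have "in_degree G u \<noteq> 0"
    using assms(1-4) unfolding single_source_def by auto
  then have "in_arcs G u \<noteq> {}" by (auto simp: in_degree_def)
  then obtain e where "e \<in> in_arcs G u" by blast
  then have e: "e \<in> arcs G" "head G e = u" by auto
  have "h v \<le> h (tail G e)" using source_height_le[OF assms(1,3) v_source tail_in_verts[OF e(1)]] .
  also have "\<dots> < h u" using height_tail_less_head[OF e(1)] e(2) by simp
  finally show False using assms(5) by simp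
qed

lemma disjoint_walks_from_lower:
  assumes "single_source G" "a \<in> verts G" "b \<in> verts G" "a \<noteq> b" "h b \<le> h a"
    and lower: "\<And>c. c \<in> verts G \<Longrightarrow> h c < h a \<Longrightarrow> \<exists>w p q. awalk w p c \<and> awalk w q b \<and>
      set (awalk_verts w p) \<inter> set (awalk_verts w q) = {w}"
  shows "\<exists>w p q. awalk w p a \<and> awalk w q b \<and>
    set (awalk_verts w p) \<inter> set (awalk_verts w q) = {w}"
proof -
  have "in_arcs G a \<noteq> {}"
    using in_arcs_nonempty_if_not_lowest[OF assms(1,3,2)] assms(4,5) by auto
  then obtain e where "e \<in> in_arcs G a" by blast
  then have e: "e \<in> arcs G" "head G e = a" by auto
  obtain w p q where walks: "awalk w p (tail G e)" "awalk w q b"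
      "set (awalk_verts w p) \<inter> set (awalk_verts w q) = {w}"
    using lower[OF tail_in_verts[OF e(1)]] height_tail_less_head[OF e(1)] e(2) by auto
  have "a \<notin> set (awalk_verts w q)"
    using awalk_verts_height[OF walks(2)] assms(4,5) by force
  then have "set (awalk_verts w (p @ [e])) \<inter> set (awalk_verts w q) = {w}"
    using walks(3) awalk_snoc(2)[OF walks(1) e(1)] e(2) by auto
  then show ?thesis
    using awalk_snoc(1)[OF walks(1) e(1)] walks(2) unfolding e(2) by blast
qed

lemma single_source_disjoint_walks:
  assumes "single_source G" "a \<in> verts G" "b \<in> verts G"
  shows "\<exists>w p q. awalk w p a \<and> awalk w q b \<and>
    set (awalk_verts w p) \<inter> set (awalk_verts w q) = {w}"
proof -
  define P where "P a b \<longleftrightarrow> (\<exists>w p q. awalk w p a \<and> awalk w q b \<and>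
    set (awalk_verts w p) \<inter> set (awalk_verts w q) = {w})" for a b
  have P_sym: "P b a" if "P a b" for a b
    using that unfolding P_def by (metis inf_commute)
  define rank where "rank v = card {z \<in> verts G. h z < h v}" for v
  have rank_less: "rank c < rank a" if "c \<in> verts G" "h c < h a" for a c
    unfolding rank_def using that by (intro psubset_card_mono) auto
  have "P a b" if "a \<in> verts G" "b \<in> verts G" for a b
    using that
  proof (induction "rank a + rank b" arbitrary: a b rule: less_induct)
    case less
    consider "a = b" | "a \<noteq> b" "h b \<le> h a" | "a \<noteq> b" "h a \<le> h b" by fastforce
    then show ?case
    proof cases
      case 1
      then have "awalk a [] b" "set (awalk_verts a []) \<inter> set (awalk_verts a []) = {a}"
        using less.prems by (auto simp: awalk_Nil_iff)
      then show ?thesis unfolding P_def \<open>a = b\<close> by blast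
    next
      case 2
      then show ?thesis
        using disjoint_walks_from_lower[OF assms(1) less.prems] less.hyps[OF _ _ less.prems(2)]
          rank_less unfolding P_def by simp
    next
      case 3
      then have "P b a"
        using disjoint_walks_from_lower[OF assms(1) less.prems(2,1)] less.hyps[OF _ less.prems(1)]
          rank_less P_sym unfolding P_def by simp
      then show ?thesis by (rule P_sym)
    qed
  qed
  then show ?thesis using assms(2,3) unfolding P_def by blast
qed

end

text \<open>Along an upward arc the height determines the point, so the arc is the graph of
  arc_x \<gamma> e over the interval between the heights of its ends; outside it the value is junk.\<close>
definition arc_x :: "('b \<Rightarrow> real \<Rightarrow> real \<times> real) \<Rightarrow> 'b \<Rightarrow> real \<Rightarrow> real" where
  "arc_x \<gamma> e y = fst (\<gamma> e (inv_into {0..1} (\<lambda>t. snd (\<gamma> e t)) y))"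

fun walk_x :: "('a, 'b) pre_digraph \<Rightarrow> ('a \<Rightarrow> real \<times> real) \<Rightarrow> ('b \<Rightarrow> real \<Rightarrow> real \<times> real) \<Rightarrow>
    'a \<Rightarrow> 'b list \<Rightarrow> real \<Rightarrow> real" where
  "walk_x G pos \<gamma> w [] y = fst (pos w)"
| "walk_x G pos \<gamma> w (e # p) y =
    (if y \<le> snd (pos (head G e)) then arc_x \<gamma> e y else walk_x G pos \<gamma> (head G e) p y)"

locale upward_drawing = fin_digraph G for G :: "('a, 'b) pre_digraph" +
  fixes pos :: "'a \<Rightarrow> real \<times> real" and \<gamma> :: "'b \<Rightarrow> real \<Rightarrow> real \<times> real"
  assumes drawing: "upward_planar_drawing G pos \<gamma>"
begin

abbreviation height :: "'a \<Rightarrow> real" where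
  "height v \<equiv> snd (pos v)"

lemma
  assumes "e \<in> arcs G"
  shows arc_height_strict_mono: "strict_mono_on {0..1} (\<lambda>t. snd (\<gamma> e t))"
    and continuous_on_arc: "continuous_on {0..1} (\<gamma> e)"
    and arc_start: "\<gamma> e 0 = pos (tail G e)"
    and arc_finish: "\<gamma> e 1 = pos (head G e)"
  using drawing assms
  by (auto simp: upward_planar_drawing_def path_def pathstart_def pathfinish_def)

lemma arc_height_less:
  assumes "e \<in> arcs G" "s \<in> {0..1}" "t \<in> {0..1}" "s < t"
  shows "snd (\<gamma> e s) < snd (\<gamma> e t)"
  using strict_mono_onD[OF arc_height_strict_mono[OF assms(1)]] assms(2-4) by auto

sublocale graded_digraph G height
  by unfold_locales (use arc_height_less[of _ 0 1] arc_start arc_finish in auto)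

lemma arc_interior_height:
  assumes "e \<in> arcs G" "s \<in> {0<..<1}"
  shows "snd (\<gamma> e s) \<in> {height (tail G e)<..<height (head G e)}"
  using arc_height_less[OF assms(1), of 0 s] arc_height_less[OF assms(1), of s 1] assms(2)
  by (simp add: arc_start[OF assms(1)] arc_finish[OF assms(1)])

lemma arc_height_image:
  assumes "e \<in> arcs G"
  shows "(\<lambda>t. snd (\<gamma> e t)) ` {0..1} = {height (tail G e)..height (head G e)}"
proof
  have "snd (\<gamma> e 0) \<le> snd (\<gamma> e t) \<and> snd (\<gamma> e t) \<le> snd (\<gamma> e 1)" if "t \<in> {0..1}" for t
    using that strict_mono_on_leD[OF arc_height_strict_mono[OF assms]] by auto
  then show "(\<lambda>t. snd (\<gamma> e t)) ` {0..1} \<subseteq> {height (tail G e)..height (head G e)}"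
    using arc_start[OF assms] arc_finish[OF assms] by auto
  have "continuous_on {0..1} (\<lambda>t. snd (\<gamma> e t))"
    using continuous_on_arc[OF assms] by (intro continuous_intros)
  then have "\<exists>t\<ge>0. t \<le> 1 \<and> snd (\<gamma> e t) = y" if "y \<in> {height (tail G e)..height (head G e)}" for y
    using that arc_start[OF assms] arc_finish[OF assms] by (intro IVT') auto
  then show "{height (tail G e)..height (head G e)} \<subseteq> (\<lambda>t. snd (\<gamma> e t)) ` {0..1}"
    by force
qed

lemma arc_x_param:
  assumes "e \<in> arcs G" "t \<in> {0..1}"
  shows "arc_x \<gamma> e (snd (\<gamma> e t)) = fst (\<gamma> e t)"
  using inv_into_f_f[OF strict_mono_on_imp_inj_on[OF arc_height_strict_mono[OF assms(1)]] assms(2)]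
  by (simp add: arc_x_def)

lemma arc_x_ends:
  assumes "e \<in> arcs G"
  shows "arc_x \<gamma> e (height (tail G e)) = fst (pos (tail G e))"
    and "arc_x \<gamma> e (height (head G e)) = fst (pos (head G e))"
  using arc_x_param[OF assms, of 0] arc_x_param[OF assms, of 1]
  by (simp_all add: arc_start[OF assms] arc_finish[OF assms])

lemma arc_x_on_arc:
  assumes "e \<in> arcs G" "y \<in> {height (tail G e)..height (head G e)}"
  shows "(arc_x \<gamma> e y, y) \<in> path_image (\<gamma> e)"
proof -
  obtain t where t: "t \<in> {0..1}" "y = snd (\<gamma> e t)"
    using assms(2) arc_height_image[OF assms(1)] by blast
  then have "(arc_x \<gamma> e y, y) = \<gamma> e t"
    using arc_x_param[OF assms(1)] by (simp add: prod_eq_iff)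
  then show ?thesis using t(1) by (simp add: path_image_def)
qed

lemma continuous_on_arc_x:
  assumes "e \<in> arcs G"
  shows "continuous_on {height (tail G e)..height (head G e)} (arc_x \<gamma> e)"
proof -
  let ?h = "\<lambda>t. snd (\<gamma> e t)"
  have "continuous_on {0..1} ?h" "continuous_on {0..1} (\<lambda>t. fst (\<gamma> e t))"
    using continuous_on_arc[OF assms] by (auto intro: continuous_intros)
  have "continuous_on (?h ` {0..1}) (inv_into {0..1} ?h)"
    by (rule continuous_on_inv[OF \<open>continuous_on {0..1} ?h\<close> compact_Icc])
      (simp add: inv_into_f_f[OF strict_mono_on_imp_inj_on[OF arc_height_strict_mono[OF assms]]])
  then have "continuous_on (?h ` {0..1}) (\<lambda>y. fst (\<gamma> e (inv_into {0..1} ?h y)))"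
    by (rule continuous_on_compose2[OF \<open>continuous_on {0..1} (\<lambda>t. fst (\<gamma> e t))\<close>])
      (auto intro: inv_into_into)
  then show ?thesis unfolding arc_x_def arc_height_image[OF assms] .
qed

lemma walk_x_ends:
  assumes "awalk w p z"
  shows "walk_x G pos \<gamma> w p (height w) = fst (pos w)"
    and "walk_x G pos \<gamma> w p (height z) = fst (pos z)"
proof -
  have "walk_x G pos \<gamma> w p (height w) = fst (pos w) \<and> walk_x G pos \<gamma> w p (height z) = fst (pos z)"
    using assms
  proof (induction p arbitrary: w)
    case Nil
    then show ?case by (simp add: awalk_Nil_iff)
  next
    case (Cons e p)
    then obtain e_arc: "e \<in> arcs G" and "tail G e = w" and walk: "awalk (head G e) p z"
      by (auto elim: awalk_ConsE)
    have start: "walk_x G pos \<gamma> w (e # p) (height w) = fst (pos w)"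
      using height_tail_less_head[OF e_arc] arc_x_ends(1)[OF e_arc] \<open>tail G e = w\<close> by simp
    have "walk_x G pos \<gamma> w (e # p) (height z) = fst (pos z)"
    proof (cases "height z \<le> height (head G e)")
      case True
      with awalk_height_less[OF walk] have "p = []" by fastforce
      with walk have "head G e = z" by (simp add: awalk_Nil_iff)
      then show ?thesis using arc_x_ends(2)[OF e_arc] by simp
    next
      case False
      then show ?thesis using Cons.IH[OF walk] by simp
    qed
    with start show ?case by simp
  qed
  then show "walk_x G pos \<gamma> w p (height w) = fst (pos w)"
    and "walk_x G pos \<gamma> w p (height z) = fst (pos z)" by auto
qed

lemma continuous_on_walk_x:
  assumes "awalk w p z"
  shows "continuous_on {height w..height z} (walk_x G pos \<gamma> w p)"
  using assms
proof (induction p arbitrary: w)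
  case Nil
  then show ?case by (simp add: walk_x.simps(1)[abs_def])
next
  case (Cons e p)
  then obtain e_arc: "e \<in> arcs G" and tail: "tail G e = w" and walk: "awalk (head G e) p z"
    by (auto elim: awalk_ConsE)
  let ?m = "height (head G e)"
  have "{height w..height z} = {height w..?m} \<union> {?m..height z}"
    using height_tail_less_head[OF e_arc] awalk_height_le[OF walk] tail by auto
  moreover have "continuous_on ({height w..?m} \<union> {?m..height z})
      (\<lambda>y. if y \<le> ?m then arc_x \<gamma> e y else walk_x G pos \<gamma> (head G e) p y)"
    using continuous_on_arc_x[OF e_arc] Cons.IH[OF walk] arc_x_ends(2)[OF e_arc]
      walk_x_ends(1)[OF walk] tail
    by (intro continuous_on_cases) auto
  ultimately show ?case by (simp add: walk_x.simps(2)[abs_def])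
qed

lemma walk_x_on_walk:
  assumes "awalk w p z" "p \<noteq> []" "y \<in> {height w..height z}"
  shows "\<exists>a\<in>set p. (walk_x G pos \<gamma> w p y, y) \<in> path_image (\<gamma> a)"
  using assms
proof (induction p arbitrary: w)
  case (Cons e p)
  then obtain e_arc: "e \<in> arcs G" and tail: "tail G e = w" and walk: "awalk (head G e) p z"
    by (auto elim: awalk_ConsE)
  show ?case
  proof (cases "y \<le> height (head G e)")
    case True
    then show ?thesis using arc_x_on_arc[OF e_arc] Cons.prems(3) tail by auto
  next
    case False
    then have "p \<noteq> []" using walk Cons.prems(3) by (auto simp: awalk_Nil_iff)
    then show ?thesis using Cons.IH[OF walk] Cons.prems(3) False by auto
  qed
qed simp

lemma walk_x_append:
  assumes "awalk w p m" "awalk m q z" "height m \<le> y"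
  shows "walk_x G pos \<gamma> w (p @ q) y = walk_x G pos \<gamma> m q y"
  using assms
proof (induction p arbitrary: w)
  case (Cons e p)
  then obtain e_arc: "e \<in> arcs G" and walk: "awalk (head G e) p m"
    by (auto elim: awalk_ConsE)
  show ?case
  proof (cases "y \<le> height (head G e)")
    case True
    with awalk_height_le[OF walk] Cons.prems(3)
    have "y = height m" "height (head G e) = height m" by auto
    with awalk_height_less[OF walk] have "p = []" by fastforce
    with walk have "head G e = m" by (simp add: awalk_Nil_iff)
    then show ?thesis
      using True \<open>y = height m\<close> arc_x_ends(2)[OF e_arc] walk_x_ends(1)[OF Cons.prems(2)] by simp
  next
    case False
    then show ?thesis using Cons.IH[OF walk Cons.prems(2,3)] by simp
  qed
qed (simp add: awalk_Nil_iff)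

lemma arcs_meet_at_common_ends:
  assumes "e \<in> arcs G" "e' \<in> arcs G" "e \<noteq> e'" "q \<in> path_image (\<gamma> e)" "q \<in> path_image (\<gamma> e')"
  obtains z where "z \<in> {tail G e, head G e}" "z \<in> {tail G e', head G e'}" "q = pos z"
  using drawing assms unfolding upward_planar_drawing_def by blast

lemma walk_x_in_drawing:
  assumes "awalk w p z" "p \<noteq> []" "y \<in> {height w..height z}"
  shows "(walk_x G pos \<gamma> w p y, y) \<in> drawing_set G pos \<gamma>"
  using walk_x_on_walk[OF assms] assms(1) by (auto simp: drawing_set_def awalk_def)

lemma walk_x_neq:
  assumes p: "awalk w p v" "p \<noteq> []" and q: "awalk w q v" "q \<noteq> []"
    and "last p \<noteq> last q" and meet: "set (awalk_verts w p) \<inter> set (awalk_verts w q) \<subseteq> {w, v}"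
    and y: "y \<in> {height w<..<height v}"
  shows "walk_x G pos \<gamma> w p y \<noteq> walk_x G pos \<gamma> w q y"
proof
  assume eq: "walk_x G pos \<gamma> w p y = walk_x G pos \<gamma> w q y"
  obtain a where a: "a \<in> set p" "(walk_x G pos \<gamma> w p y, y) \<in> path_image (\<gamma> a)"
    using walk_x_on_walk[OF p, of y] y by auto
  obtain b where b: "b \<in> set q" "(walk_x G pos \<gamma> w p y, y) \<in> path_image (\<gamma> b)"
    using walk_x_on_walk[OF q, of y] y eq by auto
  have arcs: "a \<in> arcs G" "b \<in> arcs G" using a(1) b(1) p(1) q(1) by (auto simp: awalk_def)
  have ends: "{tail G a, head G a} \<subseteq> set (awalk_verts w p)"
    "{tail G b, head G b} \<subseteq> set (awalk_verts w q)"
    using a(1) b(1) set_awalk_verts[OF p(1)] set_awalk_verts[OF q(1)] by auto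
  show False
  proof (cases "a = b")
    case True
    with ends meet have "{tail G a, head G a} \<subseteq> {w, v}" by auto
    with height_tail_less_head[OF arcs(1)] y have "head G a = v" by auto
    then show False
      using awalk_arc_to_end_is_last[OF p(1) a(1)] awalk_arc_to_end_is_last[OF q(1) b(1)]
        True \<open>last p \<noteq> last q\<close> by simp
  next
    case False
    then obtain z where "z \<in> {tail G a, head G a}" "z \<in> {tail G b, head G b}"
      "(walk_x G pos \<gamma> w p y, y) = pos z"
      using arcs_meet_at_common_ends[OF arcs _ a(2) b(2)] by blast
    with ends meet have "z \<in> {w, v}" "height z = y" by (auto simp: prod_eq_iff)
    then show False using y by auto
  qed
qed

lemma between_walks_not_outside:
  assumes p: "awalk w p v" "p \<noteq> []" and q: "awalk w q v" "q \<noteq> []"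
    and "last p \<noteq> last q" "set (awalk_verts w p) \<inter> set (awalk_verts w q) \<subseteq> {w, v}"
    and y1: "y1 \<in> {height w<..<height v}" "walk_x G pos \<gamma> w p y1 < walk_x G pos \<gamma> w q y1"
    and y: "y \<in> {height w<..<height v}"
  shows "walk_x G pos \<gamma> w p y < walk_x G pos \<gamma> w q y"
    and "x \<in> {walk_x G pos \<gamma> w p y<..<walk_x G pos \<gamma> w q y} \<Longrightarrow>
      (x, y) \<notin> outside (drawing_set G pos \<gamma>)"
proof -
  have cont: "continuous_on {height w..height v} (walk_x G pos \<gamma> w p)"
    "continuous_on {height w..height v} (walk_x G pos \<gamma> w q)"
    using continuous_on_walk_x[OF p(1)] continuous_on_walk_x[OF q(1)] by auto
  let ?S = "{height w<..<height v}"
  show "walk_x G pos \<gamma> w p y < walk_x G pos \<gamma> w q y"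
  proof (rule continuous_less_if_neq[of ?S "walk_x G pos \<gamma> w p" "walk_x G pos \<gamma> w q"])
    show "continuous_on ?S (walk_x G pos \<gamma> w p)" "continuous_on ?S (walk_x G pos \<gamma> w q)"
      using cont by (auto elim: continuous_on_subset)
    show "walk_x G pos \<gamma> w p y \<noteq> walk_x G pos \<gamma> w q y" if "y \<in> ?S" for y
      using walk_x_neq[OF p q assms(5,6) that] .
  qed (use y1 y in auto)
  show "(x, y) \<notin> outside (drawing_set G pos \<gamma>)"
    if "x \<in> {walk_x G pos \<gamma> w p y<..<walk_x G pos \<gamma> w q y}"
  proof (rule between_graphs_not_outside[OF cont])
    show "walk_x G pos \<gamma> w p (height w) = walk_x G pos \<gamma> w q (height w)"
      "walk_x G pos \<gamma> w p (height v) = walk_x G pos \<gamma> w q (height v)"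
      using walk_x_ends[OF p(1)] walk_x_ends[OF q(1)] by simp_all
  qed (use that y walk_x_in_drawing[OF p] walk_x_in_drawing[OF q] in auto)
qed

lemma arc_reaches_near_end:
  assumes "e \<in> arcs G" "0 < \<delta>" "\<delta> \<le> 1" "snd (\<gamma> e (1 - \<delta>)) < y" "y < height (head G e)"
  obtains s where "s \<in> {1 - \<delta><..<1}" "snd (\<gamma> e s) = y"
proof -
  have "height (tail G e) \<le> snd (\<gamma> e (1 - \<delta>))"
    using strict_mono_on_leD[OF arc_height_strict_mono[OF assms(1)], of 0 "1 - \<delta>"] assms(2,3)
    by (simp add: arc_start[OF assms(1)])
  then obtain s where s: "s \<in> {0..1}" "snd (\<gamma> e s) = y"
    using assms(4,5) arc_height_image[OF assms(1)] by (metis atLeastAtMost_iff image_iff less_imp_le order.trans)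
  have "1 - \<delta> < s"
    using s assms(2-4) strict_mono_on_leD[OF arc_height_strict_mono[OF assms(1)], of s "1 - \<delta>"] by force
  moreover have "s \<noteq> 1" using s(2) assms(5) arc_finish[OF assms(1)] by auto
  ultimately show thesis using s by (intro that[of s]) auto
qed

lemma left_near_end_arc_x_less:
  assumes e: "e1 \<in> arcs G" "e2 \<in> arcs G" and v: "head G e1 = v" "head G e2 = v"
    and "left_near_end \<gamma> e1 e2"
  obtains y where "height (tail G e1) < y" "height (tail G e2) < y" "y < height v"
    "arc_x \<gamma> e1 y < arc_x \<gamma> e2 y"
proof -
  obtain \<delta> where \<delta>: "0 < \<delta>" "\<delta> \<le> 1" and left: "\<forall>s\<in>{1-\<delta><..<1}. \<forall>t\<in>{1-\<delta><..<1}.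
      snd (\<gamma> e1 s) = snd (\<gamma> e2 t) \<longrightarrow> fst (\<gamma> e1 s) < fst (\<gamma> e2 t)"
    using assms(5) unfolding left_near_end_def by blast
  define lo where "lo = Max {height (tail G e1), height (tail G e2), snd (\<gamma> e1 (1 - \<delta>)), snd (\<gamma> e2 (1 - \<delta>))}"
  have "snd (\<gamma> e1 (1 - \<delta>)) < height v" "snd (\<gamma> e2 (1 - \<delta>)) < height v"
    using arc_height_less[OF e(1), of "1 - \<delta>" 1] arc_height_less[OF e(2), of "1 - \<delta>" 1] \<delta>
    by (auto simp: arc_finish e v)
  then have "lo < height v"
    using height_tail_less_head[OF e(1)] height_tail_less_head[OF e(2)] v by (simp add: lo_def)
  define y where "y = (lo + height v) / 2"
  have y: "lo < y" "y < height v" using \<open>lo < height v\<close> by (auto simp: y_def)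
  obtain s where "s \<in> {1 - \<delta><..<1}" "snd (\<gamma> e1 s) = y"
    by (rule arc_reaches_near_end[OF e(1) \<delta>, of y]) (use y v in \<open>auto simp: lo_def\<close>)
  moreover obtain t where "t \<in> {1 - \<delta><..<1}" "snd (\<gamma> e2 t) = y"
    by (rule arc_reaches_near_end[OF e(2) \<delta>, of y]) (use y v in \<open>auto simp: lo_def\<close>)
  moreover from calculation have "arc_x \<gamma> e1 y = fst (\<gamma> e1 s)" "arc_x \<gamma> e2 y = fst (\<gamma> e2 t)"
    using arc_x_param[OF e(1), of s] arc_x_param[OF e(2), of t] \<delta>(2) by auto
  ultimately show thesis using that left y by (auto simp: lo_def)
qed

lemma incoming_arcs_bound_region:
  assumes "single_source G" and e: "e1 \<in> arcs G" "e2 \<in> arcs G" "e1 \<noteq> e2"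
    and v: "head G e1 = v" "head G e2 = v" and "left_near_end \<gamma> e1 e2"
  shows "y \<in> {height (tail G e1)<..<height v} \<Longrightarrow>
      \<exists>x'>arc_x \<gamma> e1 y. \<forall>x\<in>{arc_x \<gamma> e1 y<..<x'}. (x, y) \<notin> outside (drawing_set G pos \<gamma>)"
    and "y \<in> {height (tail G e2)<..<height v} \<Longrightarrow>
      \<exists>x'<arc_x \<gamma> e2 y. \<forall>x\<in>{x'<..<arc_x \<gamma> e2 y}. (x, y) \<notin> outside (drawing_set G pos \<gamma>)"
proof -
  obtain w p q where p: "awalk w p (tail G e1)" and q: "awalk w q (tail G e2)"
    and meet: "set (awalk_verts w p) \<inter> set (awalk_verts w q) = {w}"
    using single_source_disjoint_walks[OF assms(1) tail_in_verts[OF e(1)] tail_in_verts[OF e(2)]]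
    by blast
  let ?L = "p @ [e1]" and ?R = "q @ [e2]"
  have L: "awalk w ?L v" "?L \<noteq> []" and R: "awalk w ?R v" "?R \<noteq> []"
    using awalk_snoc(1)[OF p e(1)] awalk_snoc(1)[OF q e(2)] v by auto
  have "v \<notin> set (awalk_verts w p)" "v \<notin> set (awalk_verts w q)"
    using awalk_verts_height[OF p] awalk_verts_height[OF q] height_tail_less_head e v by force+
  then have meet_LR: "set (awalk_verts w ?L) \<inter> set (awalk_verts w ?R) \<subseteq> {w, v}"
    using meet awalk_snoc(2)[OF p e(1)] awalk_snoc(2)[OF q e(2)] v by auto
  have f: "walk_x G pos \<gamma> w ?L y = arc_x \<gamma> e1 y" if "height (tail G e1) \<le> y" "y \<le> height v" for y
    using walk_x_append[OF p arc_implies_awalk[OF e(1)] that(1)] that(2) v by simp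
  have g: "walk_x G pos \<gamma> w ?R y = arc_x \<gamma> e2 y" if "height (tail G e2) \<le> y" "y \<le> height v" for y
    using walk_x_append[OF q arc_implies_awalk[OF e(2)] that(1)] that(2) v by simp
  obtain y1 where y1: "height (tail G e1) < y1" "height (tail G e2) < y1" "y1 < height v"
      "arc_x \<gamma> e1 y1 < arc_x \<gamma> e2 y1"
    using left_near_end_arc_x_less[OF e(1,2) v assms(7)] by blast
  have low: "height w \<le> height (tail G e1)" "height w \<le> height (tail G e2)"
    using awalk_height_le[OF p] awalk_height_le[OF q] .
  note region = between_walks_not_outside[OF L R _ meet_LR, of y1]
  have "last ?L \<noteq> last ?R" using e(3) by simp
  with y1 low f g have less: "walk_x G pos \<gamma> w ?L y < walk_x G pos \<gamma> w ?R y"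
    and inside: "x \<in> {walk_x G pos \<gamma> w ?L y<..<walk_x G pos \<gamma> w ?R y} \<Longrightarrow>
      (x, y) \<notin> outside (drawing_set G pos \<gamma>)"
    if "y \<in> {height w<..<height v}" for x y
    using region[OF _ _ _ that] by auto
  show "\<exists>x'>arc_x \<gamma> e1 y. \<forall>x\<in>{arc_x \<gamma> e1 y<..<x'}. (x, y) \<notin> outside (drawing_set G pos \<gamma>)"
    if "y \<in> {height (tail G e1)<..<height v}"
    using that low less[of y] inside[of y] f[of y]
    by (intro exI[of _ "walk_x G pos \<gamma> w ?R y"]) auto
  show "\<exists>x'<arc_x \<gamma> e2 y. \<forall>x\<in>{x'<..<arc_x \<gamma> e2 y}. (x, y) \<notin> outside (drawing_set G pos \<gamma>)"
    if "y \<in> {height (tail G e2)<..<height v}"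
    using that low less[of y] inside[of y] g[of y]
    by (intro exI[of _ "walk_x G pos \<gamma> w ?L y"]) auto
qed

lemma left_incoming_imp_not_right_face_outer:
  assumes "single_source G" "e \<in> arcs G" "left_incoming G \<gamma> e"
  shows "\<not> right_face_outer G pos \<gamma> e"
proof
  assume "right_face_outer G pos \<gamma> e"
  then obtain s \<epsilon> where s: "s \<in> {0<..<1}" "0 < \<epsilon>"
    and outer: "\<forall>t\<in>{0<..<\<epsilon>}. \<gamma> e s + (t, 0) \<in> outside (drawing_set G pos \<gamma>)"
    unfolding right_face_outer_def by blast
  obtain e' where e': "e' \<in> arcs G" "e' \<noteq> e" "head G e' = head G e" "left_near_end \<gamma> e e'"
    using assms(3) unfolding left_incoming_def by blast
  obtain x' where x': "fst (\<gamma> e s) < x'"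
    and inner: "\<forall>x\<in>{fst (\<gamma> e s)<..<x'}. (x, snd (\<gamma> e s)) \<notin> outside (drawing_set G pos \<gamma>)"
    using incoming_arcs_bound_region(1)[OF assms(1,2) e'(1) e'(2)[symmetric] refl e'(3) e'(4),
        where y = "snd (\<gamma> e s)"]
      arc_interior_height[OF assms(2) s(1)] arc_x_param[OF assms(2), of s] s(1) by auto
  define t where "t = min \<epsilon> (x' - fst (\<gamma> e s)) / 2"
  have "t \<in> {0<..<\<epsilon>}" "fst (\<gamma> e s) + t \<in> {fst (\<gamma> e s)<..<x'}"
    using s(2) x' by (auto simp: t_def min_def field_simps)
  moreover have "\<gamma> e s + (t, 0) = (fst (\<gamma> e s) + t, snd (\<gamma> e s))" by (simp add: prod_eq_iff)
  ultimately show False using outer inner by fastforce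
qed

lemma right_incoming_imp_not_left_face_outer:
  assumes "single_source G" "e \<in> arcs G" "right_incoming G \<gamma> e"
  shows "\<not> left_face_outer G pos \<gamma> e"
proof
  assume "left_face_outer G pos \<gamma> e"
  then obtain s \<epsilon> where s: "s \<in> {0<..<1}" "0 < \<epsilon>"
    and outer: "\<forall>t\<in>{0<..<\<epsilon>}. \<gamma> e s - (t, 0) \<in> outside (drawing_set G pos \<gamma>)"
    unfolding left_face_outer_def by blast
  obtain e' where e': "e' \<in> arcs G" "e' \<noteq> e" "head G e' = head G e" "left_near_end \<gamma> e' e"
    using assms(3) unfolding right_incoming_def by blast
  obtain x' where x': "x' < fst (\<gamma> e s)"
    and inner: "\<forall>x\<in>{x'<..<fst (\<gamma> e s)}. (x, snd (\<gamma> e s)) \<notin> outside (drawing_set G pos \<gamma>)"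
    using incoming_arcs_bound_region(2)[OF assms(1) e'(1) assms(2) e'(2) e'(3) refl e'(4),
        where y = "snd (\<gamma> e s)"]
      arc_interior_height[OF assms(2) s(1)] arc_x_param[OF assms(2), of s] s(1) by auto
  define t where "t = min \<epsilon> (fst (\<gamma> e s) - x') / 2"
  have "t \<in> {0<..<\<epsilon>}" "fst (\<gamma> e s) - t \<in> {x'<..<fst (\<gamma> e s)}"
    using s(2) x' by (auto simp: t_def min_def field_simps)
  moreover have "\<gamma> e s - (t, 0) = (fst (\<gamma> e s) - t, snd (\<gamma> e s))" by (simp add: prod_eq_iff)
  ultimately show False using outer inner by fastforce
qed

end

theorem mainTheorem5:
  fixes G :: "('a, 'b) pre_digraph"
    and pos :: "'a \<Rightarrow> real \<times> real"
    and \<gamma> :: "'b \<Rightarrow> real \<Rightarrow> real \<times> real"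
  assumes "fin_digraph G"
    and "single_source G"
    and "\<forall>v\<in>verts G. in_degree G v \<le> 2 \<and> out_degree G v \<le> 2"
    and "upward_planar_drawing G pos \<gamma>"
  shows "\<forall>e\<in>arcs G. \<not> bad_wrt_outer_face G pos \<gamma> e"
proof
  fix e assume e: "e \<in> arcs G"
  interpret upward_drawing G pos \<gamma>
    using assms(1,4) by (simp add: upward_drawing_def upward_drawing_axioms_def)
  show "\<not> bad_wrt_outer_face G pos \<gamma> e"
    using left_incoming_imp_not_right_face_outer[OF assms(2) e]
      right_incoming_imp_not_left_face_outer[OF assms(2) e]
    unfolding bad_wrt_outer_face_def by blast
qed

end
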